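(* Let $T$ be a tree with no vertex of valency one, with the two parts of its natural bipartition denoted $V_1, V_2$. Suppose $G\le \mathrm{Aut}(T)$ is closed and fixes $V_1$ and $V_2$ setwise. Then $G|_{V_i}$ is closed in $\mathrm{Sym}(V_i)$ for $i=1,2$. Moreover, if for every vertex $v$ the group $G_v|_{B(v)}$ is closed in $\mathrm{Sym}(B(v))$, then the following are equivalent: (1) for all $v\in V_1$ and $w\in V_2$, all point stabilisers in $G_v|_{B(v)}$ are compact and $G_w|_{B(w)}$ is compact; (2) all point stabilisers in $G|_{V_2}$ are compact.
   Context: $B(v)$ is the set of neighbours of $v$; $G_v$ is the stabiliser of $v$ and $G_v|_{B(v)}$ the permutation group it induces on $B(v)$; $G|_{V_i}$ is the permutation group induced by $G$ on $V_i$. For any set $V$, $\mathrm{Sym}(V)$ carries the permutation topology (topology of pointwise convergence, with pointwise stabilisers of finite subsets forming a basis of identity neighbourhoods), and $\mathrm{Aut}(T)$ carries this topology as a group of permutations of $VT$. *)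

theory Defs
  imports "HOL-Analysis.Analysis"
begin

definition walk_in :: "'v set \<Rightarrow> ('v \<Rightarrow> 'v \<Rightarrow> bool) \<Rightarrow> 'v list \<Rightarrow> bool" where
  "walk_in V E xs \<longleftrightarrow> xs \<noteq> [] \<and> set xs \<subseteq> V \<and> (\<forall>i. Suc i < length xs \<longrightarrow> E (xs ! i) (xs ! Suc i))"

definition is_cycle :: "'v set \<Rightarrow> ('v \<Rightarrow> 'v \<Rightarrow> bool) \<Rightarrow> 'v list \<Rightarrow> bool" where
  "is_cycle V E xs \<longleftrightarrow> walk_in V E xs \<and> distinct xs \<and> length xs \<ge> 3 \<and> E (last xs) (hd xs)"

definition is_tree :: "'v set \<Rightarrow> ('v \<Rightarrow> 'v \<Rightarrow> bool) \<Rightarrow> bool" where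
  "is_tree V E \<longleftrightarrow> V \<noteq> {}
     \<and> (\<forall>x y. E x y \<longrightarrow> x \<in> V \<and> y \<in> V)
     \<and> (\<forall>x y. E x y \<longrightarrow> E y x)
     \<and> (\<forall>x. \<not> E x x)
     \<and> (\<forall>x\<in>V. \<forall>y\<in>V. \<exists>xs. walk_in V E xs \<and> hd xs = x \<and> last xs = y)
     \<and> (\<nexists>xs. is_cycle V E xs)"

definition nbhd :: "'v set \<Rightarrow> ('v \<Rightarrow> 'v \<Rightarrow> bool) \<Rightarrow> 'v \<Rightarrow> 'v set" where
  "nbhd V E v = {w \<in> V. E v w}"

definition Sym :: "'a set \<Rightarrow> ('a \<Rightarrow> 'a) set" where
  "Sym X = {f. bij_betw f X X \<and> (\<forall>x. x \<notin> X \<longrightarrow> f x = x)}"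

text \<open>Permutation topology on Sym(X): generated by the cosets h U_F of pointwise stabilisers
  U_F of finite subsets F of X (topology of pointwise convergence).\<close>
definition perm_top :: "'a set \<Rightarrow> ('a \<Rightarrow> 'a) topology" where
  "perm_top X = topology_generated_by
     {{g \<in> Sym X. \<forall>x\<in>F. g x = h x} | F h. finite F \<and> F \<subseteq> X \<and> h \<in> Sym X}"

definition Aut :: "'v set \<Rightarrow> ('v \<Rightarrow> 'v \<Rightarrow> bool) \<Rightarrow> ('v \<Rightarrow> 'v) set" where
  "Aut V E = {g \<in> Sym V. \<forall>x\<in>V. \<forall>y\<in>V. E x y \<longleftrightarrow> E (g x) (g y)}"

definition is_subgroup :: "('a \<Rightarrow> 'a) set \<Rightarrow> ('a \<Rightarrow> 'a) set \<Rightarrow> bool" where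
  "is_subgroup G H \<longleftrightarrow> G \<subseteq> H \<and> id \<in> G \<and> (\<forall>g\<in>G. \<forall>h\<in>G. g \<circ> h \<in> G) \<and> (\<forall>g\<in>G. inv g \<in> G)"

definition restr :: "'a set \<Rightarrow> ('a \<Rightarrow> 'a) \<Rightarrow> ('a \<Rightarrow> 'a)" where
  "restr A g = (\<lambda>x. if x \<in> A then g x else x)"

definition induced :: "('a \<Rightarrow> 'a) set \<Rightarrow> 'a set \<Rightarrow> ('a \<Rightarrow> 'a) set" where
  "induced H A = restr A ` H"

definition stab :: "('a \<Rightarrow> 'a) set \<Rightarrow> 'a \<Rightarrow> ('a \<Rightarrow> 'a) set" where
  "stab H x = {g \<in> H. g x = x}"

end

(* Closedness: a permutation f of V1 that is a pointwise limit of restrictions of elements of G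
   extends to the whole tree, since a vertex w of V2 is the unique common neighbour of any two of
   its neighbours and these lie in V1; the extension is a pointwise limit of elements of G, hence
   lies in G.

   Compactness: a closed group of permutations is compact exactly when all its orbits are finite,
   so both conditions become finiteness of orbits.  Walking along a path from x to y in the tree,
   the local conditions bound at each step the number of images of the next vertex under the
   pointwise stabiliser of the path so far; so the stabiliser of x has finitely many images of y.
   Conversely, for a neighbour y of w in V2 choose a second neighbour w' of y: an element fixing w
   sends y to the unique common neighbour of w and the image of w', which has finitely many
   possible values. *)

theory Submission
  imports Defs
begin

section \<open>The permutation topology\<close>

lemma Sym_iff_permutes: "f \<in> Sym X \<longleftrightarrow> f permutes X"
proof
  show "f permutes X" if "f \<in> Sym X"
    using that unfolding Sym_def by (auto intro: bij_imp_permutes)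
  show "f \<in> Sym X" if "f permutes X"
    using that unfolding Sym_def by (simp add: permutes_imp_bij permutes_not_in)
qed

definition perm_nbhd :: "'a set \<Rightarrow> ('a \<Rightarrow> 'a) \<Rightarrow> 'a set \<Rightarrow> ('a \<Rightarrow> 'a) set" where
  "perm_nbhd X f F = {g \<in> Sym X. \<forall>x\<in>F. g x = f x}"

definition perm_basis :: "'a set \<Rightarrow> ('a \<Rightarrow> 'a) set set" where
  "perm_basis X = {perm_nbhd X h F | F h. finite F \<and> F \<subseteq> X \<and> h \<in> Sym X}"

lemma perm_basisI: "finite F \<Longrightarrow> F \<subseteq> X \<Longrightarrow> h \<in> Sym X \<Longrightarrow> perm_nbhd X h F \<in> perm_basis X"
  unfolding perm_basis_def by blast

lemma perm_basisE:
  assumes "U \<in> perm_basis X"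
  obtains F h where "finite F" "F \<subseteq> X" "h \<in> Sym X" "U = perm_nbhd X h F"
  using assms unfolding perm_basis_def by blast

lemma perm_top_eq_generated: "perm_top X = topology_generated_by (perm_basis X)"
  unfolding perm_top_def perm_basis_def perm_nbhd_def ..

lemma perm_nbhd_eq: "f \<in> perm_nbhd X h F \<Longrightarrow> perm_nbhd X f F = perm_nbhd X h F"
  unfolding perm_nbhd_def by auto

lemma perm_nbhd_Un: "perm_nbhd X f (F \<union> F') = perm_nbhd X f F \<inter> perm_nbhd X f F'"
  unfolding perm_nbhd_def by auto

lemma perm_nbhd_subset: "perm_nbhd X f F \<subseteq> Sym X"
  unfolding perm_nbhd_def by auto

lemma topspace_perm_top: "topspace (perm_top X) = Sym X"
proof -
  have "id \<in> Sym X"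
    by (simp add: Sym_iff_permutes permutes_id)
  then have "perm_nbhd X id {} \<in> perm_basis X"
    by (simp add: perm_basisI)
  then have "Sym X \<subseteq> \<Union>(perm_basis X)"
    by (auto simp: perm_nbhd_def)
  moreover have "U \<subseteq> Sym X" if "U \<in> perm_basis X" for U
    using that perm_nbhd_subset by (elim perm_basisE) simp
  ultimately show ?thesis
    unfolding perm_top_eq_generated topology_generated_by_topspace by auto
qed

lemma basic_open_if_openin_perm_top:
  assumes "openin (perm_top X) U"
  shows "U \<subseteq> Sym X \<and> (\<forall>f\<in>U. \<exists>F. finite F \<and> F \<subseteq> X \<and> perm_nbhd X f F \<subseteq> U)"
proof -
  have "generate_topology_on (perm_basis X) U"
    using assms unfolding perm_top_eq_generated by (rule openin_topology_generated_by)
  then show ?thesis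
  proof induction
    case (Int U U')
    show ?case
    proof (intro conjI ballI)
      show "U \<inter> U' \<subseteq> Sym X"
        using Int.IH by blast
      fix f
      assume "f \<in> U \<inter> U'"
      then obtain F F' where F: "finite F" "F \<subseteq> X" "perm_nbhd X f F \<subseteq> U"
        and F': "finite F'" "F' \<subseteq> X" "perm_nbhd X f F' \<subseteq> U'"
        using Int.IH by blast
      have "perm_nbhd X f (F \<union> F') \<subseteq> U \<inter> U'"
        unfolding perm_nbhd_Un using F(3) F'(3) by (rule Int_mono)
      then show "\<exists>F. finite F \<and> F \<subseteq> X \<and> perm_nbhd X f F \<subseteq> U \<inter> U'"
        using F(1,2) F'(1,2) by (intro exI[of _ "F \<union> F'"]) simp
    qed
  next
    case (UN K)
    show ?case
    proof (intro conjI ballI)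
      show "\<Union>K \<subseteq> Sym X"
        using UN.IH by blast
      fix f
      assume "f \<in> \<Union>K"
      then obtain U where "U \<in> K" "f \<in> U"
        by blast
      then show "\<exists>F. finite F \<and> F \<subseteq> X \<and> perm_nbhd X f F \<subseteq> \<Union>K"
        using UN.IH by (meson Union_upper subset_trans)
    qed
  next
    case (Basis U)
    then obtain F h where "finite F" "F \<subseteq> X" "U = perm_nbhd X h F"
      by (elim perm_basisE)
    then show ?case
      using perm_nbhd_eq perm_nbhd_subset by blast
  qed auto
qed

lemma openin_perm_top_if_basic_open:
  assumes U: "U \<subseteq> Sym X" "\<forall>f\<in>U. \<exists>F. finite F \<and> F \<subseteq> X \<and> perm_nbhd X f F \<subseteq> U"
  shows "openin (perm_top X) U"
proof -
  obtain nb where nb: "\<And>f. f \<in> U \<Longrightarrow> finite (nb f) \<and> nb f \<subseteq> X \<and> perm_nbhd X f (nb f) \<subseteq> U"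
    using U(2) by metis
  have "f \<in> perm_nbhd X f (nb f)" if "f \<in> U" for f
    using U(1) that by (auto simp: perm_nbhd_def)
  then have "U = (\<Union>f\<in>U. perm_nbhd X f (nb f))"
    using nb by (intro subset_antisym UN_least) auto
  also have "openin (perm_top X) \<dots>"
  proof (intro openin_Union, clarify)
    fix f
    assume "f \<in> U"
    then have "perm_nbhd X f (nb f) \<in> perm_basis X"
      using U nb by (blast intro: perm_basisI)
    then show "openin (perm_top X) (perm_nbhd X f (nb f))"
      unfolding perm_top_eq_generated by (rule topology_generated_by_Basis)
  qed
  finally show ?thesis .
qed

lemma openin_perm_top:
  "openin (perm_top X) U \<longleftrightarrow>
     U \<subseteq> Sym X \<and> (\<forall>f\<in>U. \<exists>F. finite F \<and> F \<subseteq> X \<and> perm_nbhd X f F \<subseteq> U)"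
proof
  show "U \<subseteq> Sym X \<and> (\<forall>f\<in>U. \<exists>F. finite F \<and> F \<subseteq> X \<and> perm_nbhd X f F \<subseteq> U)"
    if "openin (perm_top X) U"
    using that by (rule basic_open_if_openin_perm_top)
  show "openin (perm_top X) U"
    if "U \<subseteq> Sym X \<and> (\<forall>f\<in>U. \<exists>F. finite F \<and> F \<subseteq> X \<and> perm_nbhd X f F \<subseteq> U)"
    using that by (elim conjE) (rule openin_perm_top_if_basic_open)
qed

definition finitely_approximable :: "('a \<Rightarrow> 'b) set \<Rightarrow> 'a set \<Rightarrow> ('a \<Rightarrow> 'b) \<Rightarrow> bool" where
  "finitely_approximable S X f \<longleftrightarrow> (\<forall>F. finite F \<and> F \<subseteq> X \<longrightarrow> (\<exists>g\<in>S. \<forall>x\<in>F. g x = f x))"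

lemma finitely_approximableD:
  "finitely_approximable S X f \<Longrightarrow> finite F \<Longrightarrow> F \<subseteq> X \<Longrightarrow> \<exists>g\<in>S. \<forall>x\<in>F. g x = f x"
  unfolding finitely_approximable_def by blast

lemma finitely_approximable_mono:
  "finitely_approximable S X f \<Longrightarrow> S \<subseteq> T \<Longrightarrow> finitely_approximable T X f"
  unfolding finitely_approximable_def by blast

lemma closedin_perm_top:
  "closedin (perm_top X) S \<longleftrightarrow>
     S \<subseteq> Sym X \<and> (\<forall>f\<in>Sym X. finitely_approximable S X f \<longrightarrow> f \<in> S)"
proof (cases "S \<subseteq> Sym X")
  case True
  have separated_iff: "(\<exists>F. finite F \<and> F \<subseteq> X \<and> perm_nbhd X f F \<subseteq> Sym X - S)
      \<longleftrightarrow> \<not> finitely_approximable S X f" for f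
    using True unfolding finitely_approximable_def perm_nbhd_def by blast
  have "closedin (perm_top X) S \<longleftrightarrow> openin (perm_top X) (Sym X - S)"
    using True unfolding closedin_def topspace_perm_top by simp
  also have "\<dots> \<longleftrightarrow> (\<forall>f\<in>Sym X - S. \<not> finitely_approximable S X f)"
    unfolding openin_perm_top separated_iff by simp
  finally show ?thesis
    using True by blast
next
  case False
  then show ?thesis
    using closedin_subset topspace_perm_top by metis
qed

lemma closedin_stab:
  assumes "closedin (perm_top X) S" "u \<in> X"
  shows "closedin (perm_top X) (stab S u)"
proof -
  have "f \<in> stab S u" if f: "f \<in> Sym X" and approx: "finitely_approximable (stab S u) X f" for f
  proof -
    have "finitely_approximable S X f"
      using approx unfolding finitely_approximable_def stab_def by blast
    then have "f \<in> S"
      using assms(1) f unfolding closedin_perm_top by blast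
    moreover have "\<exists>g\<in>stab S u. \<forall>x\<in>{u}. g x = f x"
      using finitely_approximableD[OF approx, of "{u}"] assms(2) by simp
    then have "f u = u"
      unfolding stab_def by auto
    ultimately show ?thesis
      unfolding stab_def by simp
  qed
  then show ?thesis
    using assms(1) unfolding closedin_perm_top stab_def by blast
qed

lemma continuous_map_perm_top_eval:
  assumes "x \<in> X"
  shows "continuous_map (perm_top X) (discrete_topology X) (\<lambda>g. g x)"
  unfolding continuous_map_def topspace_perm_top openin_perm_top
proof (intro conjI allI impI ballI)
  show "(\<lambda>g. g x) \<in> Sym X \<rightarrow> topspace (discrete_topology X)"
    using assms by (auto simp: Sym_iff_permutes permutes_in_image)
  fix U f
  assume "f \<in> {g \<in> Sym X. g x \<in> U}"
  then have "perm_nbhd X f {x} \<subseteq> {g \<in> Sym X. g x \<in> U}"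
    by (auto simp: perm_nbhd_def)
  then show "\<exists>F. finite F \<and> F \<subseteq> X \<and> perm_nbhd X f F \<subseteq> {g \<in> Sym X. g x \<in> U}"
    using assms by blast
qed auto

lemma continuous_map_into_perm_top:
  assumes into: "\<And>y. y \<in> topspace Y \<Longrightarrow> \<phi> y \<in> Sym X"
    and eval: "\<And>x. x \<in> X \<Longrightarrow> continuous_map Y (discrete_topology X) (\<lambda>y. \<phi> y x)"
  shows "continuous_map Y (perm_top X) \<phi>"
  unfolding perm_top_eq_generated
proof (rule continuous_on_generated_topo)
  fix U
  assume "U \<in> perm_basis X"
  then obtain F h where F: "finite F" "F \<subseteq> X" "h \<in> Sym X" and U: "U = perm_nbhd X h F"
    by (elim perm_basisE)
  have "\<phi> -` U \<inter> topspace Y = (\<Inter>x\<in>F. {y \<in> topspace Y. \<phi> y x \<in> {h x}}) \<inter> topspace Y"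
    using into unfolding U perm_nbhd_def by auto
  moreover have "openin Y {y \<in> topspace Y. \<phi> y x \<in> {h x}}" if "x \<in> F" for x
  proof (rule openin_continuous_map_preimage)
    show "continuous_map Y (discrete_topology X) (\<lambda>y. \<phi> y x)"
      using eval that F(2) by blast
    show "openin (discrete_topology X) {h x}"
      using F that by (auto simp: Sym_iff_permutes permutes_in_image)
  qed
  ultimately show "openin Y (\<phi> -` U \<inter> topspace Y)"
    using F(1) by (simp add: openin_INT)
next
  show "\<phi> ` topspace Y \<subseteq> \<Union>(perm_basis X)"
    using into topspace_perm_top unfolding perm_top_eq_generated topology_generated_by_topspace
    by blast
qed

lemma finite_orbit_if_compactin:
  assumes "compactin (perm_top X) S" "x \<in> X"
  shows "finite ((\<lambda>g. g x) ` S)"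
  using image_compactin[OF assms(1) continuous_map_perm_top_eval[OF assms(2)]]
  by (simp add: compactin_discrete_topology)

lemma closedin_product_discrete_topology:
  assumes sub: "K \<subseteq> PiE I (\<lambda>_. X)"
    and approx: "\<And>k. k \<in> PiE I (\<lambda>_. X) \<Longrightarrow> finitely_approximable K I k \<Longrightarrow> k \<in> K"
  shows "closedin (product_topology (\<lambda>_. discrete_topology X) I) K"
  unfolding closedin_def topspace_product_topology topspace_discrete_topology
proof (intro conjI sub openin_subopen[THEN iffD2] ballI)
  fix k
  assume k: "k \<in> PiE I (\<lambda>_. X) - K"
  then have "\<not> finitely_approximable K I k"
    using approx by (meson DiffD1 DiffD2)
  then obtain F where F: "finite F" "F \<subseteq> I" and apart: "\<not> (\<exists>g\<in>K. \<forall>x\<in>F. g x = k x)"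
    unfolding finitely_approximable_def by auto
  define C where "C = PiE I (\<lambda>i. if i \<in> F then {k i} else X)"
  have "{i \<in> I. (if i \<in> F then {k i} else X) \<noteq> X} \<subseteq> F"
    by auto
  moreover have "k i \<in> X" if "i \<in> I" for i
    using k that by auto
  ultimately have "openin (product_topology (\<lambda>_. discrete_topology X) I) C"
    unfolding C_def openin_PiE_gen using finite_subset[OF _ F(1)] by auto
  moreover have "k \<in> C"
    using k unfolding C_def by auto
  moreover have "C \<subseteq> PiE I (\<lambda>_. X) - K"
  proof
    fix c
    assume c: "c \<in> C"
    have "C \<subseteq> PiE I (\<lambda>_. X)"
      unfolding C_def using k by (intro PiE_mono) auto
    then have "c \<in> PiE I (\<lambda>_. X)"
      using c by blast
    moreover have "c x = k x" if "x \<in> F" for x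
      using PiE_mem[OF c[unfolded C_def], of x] that F(2) by auto
    then have "c \<notin> K"
      using apart by blast
    ultimately show "c \<in> PiE I (\<lambda>_. X) - K"
      by blast
  qed
  ultimately show "\<exists>T. openin (product_topology (\<lambda>_. discrete_topology X) I) T \<and> k \<in> T \<and> T \<subseteq> PiE I (\<lambda>_. X) - K"
    by blast
qed

lemma restr_in_Sym_iff: "restr X k \<in> Sym X \<longleftrightarrow> bij_betw k X X"
proof -
  have "restr X k \<in> Sym X \<longleftrightarrow> bij_betw (restr X k) X X"
    unfolding Sym_def by (simp add: restr_def)
  also have "\<dots> \<longleftrightarrow> bij_betw k X X"
    by (rule bij_betw_cong) (simp add: restr_def)
  finally show ?thesis .
qed

lemma restr_restrict: "g permutes X \<Longrightarrow> restr X (restrict g X) = g"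
  unfolding restr_def by (auto simp: permutes_not_in)

lemma restrict_restr: "k \<in> extensional X \<Longrightarrow> restrict (restr X k) X = k"
  unfolding restr_def by (auto simp: extensional_def)

lemma restr_Sym_if_finitely_approximable:
  assumes S: "S \<subseteq> Sym X" and inv_orbits: "\<And>y. y \<in> X \<Longrightarrow> finite ((\<lambda>g. inv g y) ` S)"
    and into: "k ` X \<subseteq> X" and approx: "finitely_approximable S X k"
  shows "restr X k \<in> Sym X"
proof -
  have perm: "g permutes X" if "g \<in> S" for g
    using S that by (auto simp: Sym_iff_permutes)
  have "inj_on k X"
  proof (rule inj_onI)
    fix x y
    assume xy: "x \<in> X" "y \<in> X" "k x = k y"
    obtain g where "g \<in> S" "g x = k x" "g y = k y"
      using finitely_approximableD[OF approx, of "{x, y}"] xy(1,2) by auto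
    then have "g x = g y"
      using xy(3) by simp
    then show "x = y"
      using permutes_inj[OF perm[OF \<open>g \<in> S\<close>]] by (simp add: inj_eq)
  qed
  moreover have "X \<subseteq> k ` X"
  proof
    fix y
    assume y: "y \<in> X"
    have inv_in: "inv g y \<in> X" if "g \<in> S" for g
      using perm[OF that] y by (simp add: permutes_inv permutes_in_image)
    then obtain g where g: "g \<in> S" "\<forall>x\<in>(\<lambda>g. inv g y) ` S. g x = k x"
      using finitely_approximableD[OF approx inv_orbits[OF y]] by blast
    then have "k (inv g y) = y"
      using permutes_inverses(1)[OF perm[OF g(1)]] by auto
    then show "y \<in> k ` X"
      using inv_in[OF g(1)] by (metis image_eqI)
  qed
  ultimately show ?thesis
    unfolding restr_in_Sym_iff bij_betw_def using into by blast
qed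

lemma closedin_restrict_image:
  assumes closed: "closedin (perm_top X) S"
    and inv_orbits: "\<And>y. y \<in> X \<Longrightarrow> finite ((\<lambda>g. inv g y) ` S)"
  shows "closedin (product_topology (\<lambda>_. discrete_topology X) X) ((\<lambda>g. restrict g X) ` S)"
proof (rule closedin_product_discrete_topology)
  have S: "S \<subseteq> Sym X"
    using closed by (simp add: closedin_perm_top)
  then show "(\<lambda>g. restrict g X) ` S \<subseteq> PiE X (\<lambda>_. X)"
    by (auto simp: Sym_iff_permutes permutes_in_image)
  fix k
  assume k: "k \<in> PiE X (\<lambda>_. X)"
    and approx_restrict: "finitely_approximable ((\<lambda>g. restrict g X) ` S) X k"
  have approx: "finitely_approximable S X k"
    unfolding finitely_approximable_def
  proof (intro allI impI, elim conjE)
    fix F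
    assume F: "finite F" "F \<subseteq> X"
    obtain g where "g \<in> S" "\<forall>x\<in>F. restrict g X x = k x"
      using finitely_approximableD[OF approx_restrict F] by blast
    then show "\<exists>g\<in>S. \<forall>x\<in>F. g x = k x"
      using F(2) by (metis restrict_apply' subsetD)
  qed
  then have "finitely_approximable S X (restr X k)"
    unfolding finitely_approximable_def restr_def by (simp add: subset_iff)
  moreover have "k ` X \<subseteq> X"
    using k by auto
  then have "restr X k \<in> Sym X"
    using restr_Sym_if_finitely_approximable[OF S inv_orbits _ approx] by blast
  ultimately have "restr X k \<in> S"
    using closed unfolding closedin_perm_top by blast
  moreover have "restrict (restr X k) X = k"
    using k by (simp add: PiE_iff restrict_restr)
  ultimately show "k \<in> (\<lambda>g. restrict g X) ` S"
    by (metis image_eqI)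
qed

text \<open>Restriction to X embeds S into the product of the finite orbits, compact by Tychonoff.
  The image is closed because a pointwise limit of elements of S is surjective on X, which is
  where the finiteness of the orbits of the inverses is needed.\<close>

lemma compactin_perm_top_if_orbits_finite:
  assumes closed: "closedin (perm_top X) S"
    and orbits: "\<And>x. x \<in> X \<Longrightarrow> finite ((\<lambda>g. g x) ` S)"
    and inv_orbits: "\<And>x. x \<in> X \<Longrightarrow> finite ((\<lambda>g. inv g x) ` S)"
  shows "compactin (perm_top X) S"
proof -
  define P where "P = product_topology (\<lambda>_. discrete_topology X) X"
  define K where "K = (\<lambda>g. restrict g X) ` S"
  have perm: "g permutes X" if "g \<in> S" for g
    using closed that by (auto simp: closedin_perm_top Sym_iff_permutes)
  have "compactin P (PiE X (\<lambda>x. (\<lambda>g. g x) ` S))"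
    unfolding P_def compactin_PiE using orbits perm
    by (auto simp: compactin_discrete_topology permutes_in_image)
  moreover have "K \<subseteq> PiE X (\<lambda>x. (\<lambda>g. g x) ` S)"
    unfolding K_def by auto
  moreover have "closedin P K"
    unfolding P_def K_def using closed inv_orbits by (rule closedin_restrict_image)
  ultimately have "compactin (subtopology P K) K"
    by (simp add: compactin_subtopology closed_compactin)
  moreover have "continuous_map (subtopology P K) (perm_top X) (restr X)"
  proof (rule continuous_map_into_perm_top)
    fix k
    assume "k \<in> topspace (subtopology P K)"
    then obtain g where "g \<in> S" "k = restrict g X"
      unfolding K_def by auto
    then show "restr X k \<in> Sym X"
      using perm closed by (auto simp: restr_restrict closedin_perm_top)
  next
    fix x
    assume x: "x \<in> X"
    then have "(\<lambda>k. restr X k x) = (\<lambda>k. k x)"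
      by (simp add: restr_def)
    then show "continuous_map (subtopology P K) (discrete_topology X) (\<lambda>k. restr X k x)"
      using continuous_map_from_subtopology[OF continuous_map_product_projection[OF x]]
      unfolding P_def by simp
  qed
  moreover have "restr X ` K = S"
    unfolding K_def image_image using perm by (simp add: restr_restrict)
  ultimately show ?thesis
    by (metis image_compactin)
qed

lemma compactin_perm_top_iff_orbits_finite:
  assumes closed: "closedin (perm_top X) S" and inv_closed: "\<And>g. g \<in> S \<Longrightarrow> inv g \<in> S"
  shows "compactin (perm_top X) S \<longleftrightarrow> (\<forall>x\<in>X. finite ((\<lambda>g. g x) ` S))"
proof
  show "\<forall>x\<in>X. finite ((\<lambda>g. g x) ` S)" if "compactin (perm_top X) S"
    using finite_orbit_if_compactin[OF that] by blast
  assume orbits: "\<forall>x\<in>X. finite ((\<lambda>g. g x) ` S)"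
  have "(\<lambda>g. inv g x) ` S \<subseteq> (\<lambda>g. g x) ` S" for x
    using inv_closed by blast
  then show "compactin (perm_top X) S"
    using closed orbits by (intro compactin_perm_top_if_orbits_finite) (auto dest: finite_subset)
qed

section \<open>Induced permutation groups\<close>

lemma restr_Sym: "bij g \<Longrightarrow> g ` A = A \<Longrightarrow> restr A g \<in> Sym A"
  unfolding restr_in_Sym_iff by (rule bij_betw_subset) auto

lemma inv_restr:
  assumes g: "bij g" "g ` A = A"
  shows "inv (restr A g) = restr A (inv g)"
proof (rule inv_unique_comp)
  have "inv g ` A = A"
    using g by (metis bij_is_inj image_inv_f_f)
  then have "inv g x \<in> A" if "x \<in> A" for x
    using that by blast
  then show "restr A g \<circ> restr A (inv g) = id"
    using g by (auto simp: restr_def fun_eq_iff bij_is_surj surj_f_inv_f)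
  show "restr A (inv g) \<circ> restr A g = id"
    using g by (auto simp: restr_def fun_eq_iff bij_is_inj)
qed

lemma finitely_approximable_induced_iff:
  "finitely_approximable (induced G A) A f \<longleftrightarrow> finitely_approximable G A f"
  unfolding finitely_approximable_def induced_def restr_def by (auto 0 4 simp: subset_iff)

lemma stab_induced: "u \<in> A \<Longrightarrow> stab (induced H A) u = induced (stab H u) A"
  unfolding stab_def induced_def restr_def by auto

lemma orbit_induced: "x \<in> A \<Longrightarrow> (\<lambda>h. h x) ` induced H A = (\<lambda>g. g x) ` H"
  unfolding induced_def restr_def by (auto simp: image_iff)

lemma compactin_induced_iff_orbits_finite:
  assumes bij: "\<And>g. g \<in> H \<Longrightarrow> bij g" and inv_closed: "\<And>g. g \<in> H \<Longrightarrow> inv g \<in> H"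
    and invariant: "\<And>g. g \<in> H \<Longrightarrow> g ` A = A"
    and closed: "closedin (perm_top A) (induced H A)"
  shows "compactin (perm_top A) (induced H A) \<longleftrightarrow> (\<forall>y\<in>A. finite ((\<lambda>g. g y) ` H))"
proof -
  have "inv h \<in> induced H A" if "h \<in> induced H A" for h
    using that inv_closed bij invariant by (auto simp: induced_def inv_restr)
  then show ?thesis
    using closed by (simp add: compactin_perm_top_iff_orbits_finite orbit_induced)
qed

lemma compactin_stab_induced_iff_orbits_finite:
  assumes bij: "\<And>g. g \<in> H \<Longrightarrow> bij g" and inv_closed: "\<And>g. g \<in> H \<Longrightarrow> inv g \<in> H"
    and invariant: "\<And>g. g \<in> H \<Longrightarrow> g ` A = A"
    and closed: "closedin (perm_top A) (induced H A)" and u: "u \<in> A"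
  shows "compactin (perm_top A) (stab (induced H A) u) \<longleftrightarrow> (\<forall>y\<in>A. finite ((\<lambda>g. g y) ` stab H u))"
  unfolding stab_induced[OF u]
proof (rule compactin_induced_iff_orbits_finite)
  fix g
  assume g: "g \<in> stab H u"
  then show "bij g" and "g ` A = A"
    using bij invariant by (auto simp: stab_def)
  show "inv g \<in> stab H u"
    using g bij[of g] inv_closed[of g] bij_inv_eq_iff[of g u u] by (auto simp: stab_def)
next
  show "closedin (perm_top A) (induced (stab H u) A)"
    using closedin_stab[OF closed u] by (simp add: stab_induced[OF u])
qed

text \<open>Orbit-stabiliser counting: an element of H is determined on xs @ [z] by its values on xs
  together with the value at z of an element of the pointwise stabiliser of xs.\<close>

lemma finite_orbit_snoc:
  assumes bij: "\<And>g. g \<in> H \<Longrightarrow> bij g"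
    and inv_comp: "\<And>g h. g \<in> H \<Longrightarrow> h \<in> H \<Longrightarrow> inv g \<circ> h \<in> H"
    and tuple: "finite ((\<lambda>g. map g xs) ` H)"
    and point: "finite ((\<lambda>h. h z) ` {h \<in> H. \<forall>a\<in>set xs. h a = a})"
  shows "finite ((\<lambda>g. map g (xs @ [z])) ` H)"
proof -
  define T where "T = (\<lambda>g. map g xs) ` H"
  define C where "C = (\<lambda>h. h z) ` {h \<in> H. \<forall>a\<in>set xs. h a = a}"
  define rep where "rep t = (SOME g. g \<in> H \<and> map g xs = t)" for t
  have rep: "rep t \<in> H \<and> map (rep t) xs = t" if "t \<in> T" for t
  proof -
    have "\<exists>g. g \<in> H \<and> map g xs = t"
      using that unfolding T_def by blast
    then show ?thesis
      unfolding rep_def by (rule someI_ex)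
  qed
  have "(\<lambda>g. map g (xs @ [z])) ` H \<subseteq> (\<Union>t\<in>T. (\<lambda>c. t @ [rep t c]) ` C)"
  proof
    fix s
    assume "s \<in> (\<lambda>g. map g (xs @ [z])) ` H"
    then obtain g where g: "g \<in> H" "s = map g (xs @ [z])"
      by blast
    define t where "t = map g xs"
    have t: "t \<in> T"
      unfolding T_def t_def using g(1) by (rule imageI)
    define r where "r = rep t"
    have r: "r \<in> H" "map r xs = map g xs" "bij r"
      using rep[OF t] bij unfolding r_def t_def by auto
    define h where "h = inv r \<circ> g"
    have "h a = a" if "a \<in> set xs" for a
    proof -
      have "r a = g a"
        using r(2) that by (simp add: map_eq_conv)
      then show ?thesis
        unfolding h_def using bij_is_inj[OF r(3)] by (metis comp_apply inv_f_f)
    qed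
    moreover have "h \<in> H"
      unfolding h_def using r(1) g(1) by (rule inv_comp)
    ultimately have "h z \<in> C"
      unfolding C_def by blast
    moreover have "s = t @ [rep t (h z)]"
      using g(2) bij_is_surj[OF r(3)] unfolding t_def h_def r_def by (simp add: surj_f_inv_f)
    ultimately show "s \<in> (\<Union>t\<in>T. (\<lambda>c. t @ [rep t c]) ` C)"
      using t by blast
  qed
  moreover have "finite (\<Union>t\<in>T. (\<lambda>c. t @ [rep t c]) ` C)"
    using tuple point unfolding T_def[symmetric] C_def[symmetric] by blast
  ultimately show ?thesis
    by (rule finite_subset)
qed

section \<open>Trees and their automorphisms\<close>

lemma tree_edge_in_V: "is_tree V E \<Longrightarrow> E x y \<Longrightarrow> x \<in> V \<and> y \<in> V"
  unfolding is_tree_def by blast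

lemma tree_edge_sym: "is_tree V E \<Longrightarrow> E x y \<Longrightarrow> E y x"
  unfolding is_tree_def by blast

lemma tree_irrefl: "is_tree V E \<Longrightarrow> \<not> E x x"
  unfolding is_tree_def by blast

lemma tree_eq_if_two_common_nbrs:
  assumes tree: "is_tree V E" and edges: "E w a" "E w b" "E z a" "E z b" and "a \<noteq> b"
  shows "w = z"
proof (rule ccontr)
  assume "w \<noteq> z"
  define xs where "xs = [w, a, z, b]"
  have "set xs \<subseteq> V"
    using tree_edge_in_V[OF tree] edges unfolding xs_def by auto
  moreover have "E (xs ! i) (xs ! Suc i)" if "Suc i < length xs" for i
  proof -
    have "i = 0 \<or> i = 1 \<or> i = 2"
      using that unfolding xs_def by auto
    then show ?thesis
      using edges tree_edge_sym[OF tree] unfolding xs_def by auto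
  qed
  moreover have "distinct xs"
    using edges tree_irrefl[OF tree] \<open>a \<noteq> b\<close> \<open>w \<noteq> z\<close> unfolding xs_def by auto
  moreover have "E (last xs) (hd xs)"
    using edges tree_edge_sym[OF tree] unfolding xs_def by simp
  ultimately have "is_cycle V E xs"
    unfolding is_cycle_def walk_in_def xs_def by simp
  then show False
    using tree unfolding is_tree_def by blast
qed

lemma finite_common_nbrs:
  assumes tree: "is_tree V E" and "w \<noteq> z"
  shows "finite {c. E w c \<and> E z c}"
proof (cases "{c. E w c \<and> E z c} = {}")
  case False
  then obtain c where "E w c" "E z c"
    by blast
  then have "{c. E w c \<and> E z c} \<subseteq> {c}"
    using tree_eq_if_two_common_nbrs[OF tree] \<open>w \<noteq> z\<close> by blast
  then show ?thesis
    using finite_subset by blast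
next
  case True
  then show ?thesis
    by (simp only: finite.emptyI)
qed

lemma tree_has_nbr:
  assumes tree: "is_tree V E" and "v \<in> V" "u \<in> V" "u \<noteq> v"
  shows "\<exists>w. E v w"
proof -
  obtain xs where xs: "walk_in V E xs" "hd xs = v" "last xs = u"
    using tree assms unfolding is_tree_def by blast
  then obtain ys where "xs = v # ys"
    unfolding walk_in_def by (metis list.collapse)
  then have "Suc 0 < length xs"
    using xs(3) \<open>u \<noteq> v\<close> by (cases ys) auto
  then have "E (xs ! 0) (xs ! Suc 0)"
    using xs(1) unfolding walk_in_def by blast
  then show ?thesis
    using \<open>xs = v # ys\<close> by auto
qed

lemma walk_snocD:
  assumes "walk_in V E (xs @ [z])" "xs \<noteq> []"
  shows "walk_in V E xs" "E (last xs) z"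
proof -
  have edges: "E ((xs @ [z]) ! i) ((xs @ [z]) ! Suc i)" if "Suc i < length (xs @ [z])" for i
    using assms(1) that unfolding walk_in_def by blast
  show "walk_in V E xs"
    unfolding walk_in_def
  proof (intro conjI allI impI)
    show "xs \<noteq> []" "set xs \<subseteq> V"
      using assms unfolding walk_in_def by auto
    fix i
    assume "Suc i < length xs"
    then show "E (xs ! i) (xs ! Suc i)"
      using edges[of i] by (simp add: nth_append)
  qed
  show "E (last xs) z"
    using edges[of "length xs - 1"] assms(2) by (simp add: nth_append last_conv_nth)
qed

lemma Aut_permutes: "g \<in> Aut V E \<Longrightarrow> g permutes V"
  unfolding Aut_def by (simp add: Sym_iff_permutes)

lemma Aut_edge_iff: "g \<in> Aut V E \<Longrightarrow> x \<in> V \<Longrightarrow> y \<in> V \<Longrightarrow> E (g x) (g y) \<longleftrightarrow> E x y"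
  unfolding Aut_def by blast

lemma Aut_eq_if_eq_on_two_nbrs:
  assumes tree: "is_tree V E" and g: "g \<in> Aut V E" and h: "h \<in> Aut V E"
    and edges: "E w a" "E w b" and "a \<noteq> b" and eq: "g a = h a" "g b = h b"
  shows "g w = h w"
proof -
  have V: "w \<in> V" "a \<in> V" "b \<in> V"
    using tree_edge_in_V[OF tree] edges by blast+
  have "g a \<noteq> g b"
    using permutes_inj[OF Aut_permutes[OF g]] \<open>a \<noteq> b\<close> by (simp add: inj_eq)
  moreover have "E (g w) (g a)" "E (g w) (g b)"
    using Aut_edge_iff[OF g] V edges by simp_all
  moreover have "E (h w) (g a)" "E (h w) (g b)"
    unfolding eq using Aut_edge_iff[OF h] V edges by simp_all
  ultimately show ?thesis
    using tree_eq_if_two_common_nbrs[OF tree] by blast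
qed

lemma Aut_image_nbhd:
  assumes g: "g \<in> Aut V E" and v: "v \<in> V"
  shows "g ` nbhd V E v = nbhd V E (g v)"
proof -
  have perm: "g permutes V"
    using g by (rule Aut_permutes)
  have "g ` nbhd V E v = {y \<in> g ` V. E (g v) y}"
    unfolding nbhd_def using Aut_edge_iff[OF g v] by auto
  then show ?thesis
    unfolding nbhd_def permutes_image[OF perm] .
qed

lemma Aut_if_finitely_approximable:
  assumes outside: "\<And>x. x \<notin> V \<Longrightarrow> f x = x" and onto: "V \<subseteq> f ` V"
    and approx: "finitely_approximable (Aut V E) V f"
  shows "f \<in> Aut V E"
proof -
  have pair: "\<exists>g\<in>Aut V E. g x = f x \<and> g y = f y" if "x \<in> V" "y \<in> V" for x y
    using finitely_approximableD[OF approx, of "{x, y}"] that by auto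
  have "f x \<in> V" if "x \<in> V" for x
    using pair[OF that that] that by (metis Aut_permutes permutes_in_image)
  moreover have "inj_on f V"
  proof (rule inj_onI)
    fix x y
    assume "x \<in> V" "y \<in> V" "f x = f y"
    then show "x = y"
      using pair[of x y] by (metis Aut_permutes permutes_inj inj_eq)
  qed
  ultimately have "bij_betw f V V"
    using onto by (auto simp: bij_betw_def)
  then have "f \<in> Sym V"
    unfolding Sym_iff_permutes using outside by (rule bij_imp_permutes)
  moreover have "E (f x) (f y) \<longleftrightarrow> E x y" if "x \<in> V" "y \<in> V" for x y
    using pair[OF that] that by (metis Aut_edge_iff)
  ultimately show ?thesis
    unfolding Aut_def by blast
qed

lemma closedin_Aut_subset: "closedin (subtopology (perm_top V) (Aut V E)) G \<Longrightarrow> G \<subseteq> Aut V E"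
  by (metis closedin_subset inf.boundedE topspace_subtopology)

lemma closedin_Aut_mem:
  assumes "closedin (subtopology (perm_top V) (Aut V E)) G"
    and "f \<in> Aut V E" "finitely_approximable G V f"
  shows "f \<in> G"
proof -
  obtain T where T: "closedin (perm_top V) T" "G = T \<inter> Aut V E"
    using assms(1) unfolding closedin_subtopology by blast
  have "finitely_approximable T V f"
    using assms(3) T(2) unfolding finitely_approximable_def by blast
  moreover have "f \<in> Sym V"
    using assms(2) unfolding Aut_def by blast
  ultimately show ?thesis
    using T assms(2) unfolding closedin_perm_top by blast
qed

lemma is_subgroupD:
  assumes "is_subgroup G H"
  shows "G \<subseteq> H" "g \<in> G \<Longrightarrow> inv g \<in> G" "g \<in> G \<Longrightarrow> h \<in> G \<Longrightarrow> g \<circ> h \<in> G"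
  using assms unfolding is_subgroup_def by simp_all

lemma subgroup_Aut_bij:
  assumes "is_subgroup G (Aut V E)" "g \<in> G"
  shows "bij g"
  using is_subgroupD(1)[OF assms(1)] assms(2) by (metis subsetD permutes_bij Aut_permutes)

lemma subgroup_stab_bij: "is_subgroup G (Aut V E) \<Longrightarrow> g \<in> stab G x \<Longrightarrow> bij g"
  unfolding stab_def by (blast intro: subgroup_Aut_bij)

lemma subgroup_stab_inv:
  assumes "is_subgroup G (Aut V E)" "g \<in> stab G x"
  shows "inv g \<in> stab G x"
proof -
  have g: "g \<in> G" "g x = x"
    using assms(2) unfolding stab_def by auto
  then have "inv g x = x"
    using bij_inv_eq_iff[OF subgroup_Aut_bij[OF assms(1) g(1)]] by metis
  then show ?thesis
    using is_subgroupD(2)[OF assms(1) g(1)] unfolding stab_def by simp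
qed

lemma subgroup_stab_inv_comp:
  assumes "is_subgroup G (Aut V E)" "g \<in> stab G x" "h \<in> stab G x"
  shows "inv g \<circ> h \<in> stab G x"
proof -
  have "inv g \<in> G" "inv g x = x" "h \<in> G" "h x = x"
    using subgroup_stab_inv[OF assms(1,2)] assms(3) unfolding stab_def by auto
  then show ?thesis
    using is_subgroupD(3)[OF assms(1)] unfolding stab_def by simp
qed

lemma subgroup_stab_nbhd_invariant:
  assumes "is_subgroup G (Aut V E)" "v \<in> V" "g \<in> stab G v"
  shows "g ` nbhd V E v = nbhd V E v"
proof -
  have "g \<in> Aut V E" "g v = v"
    using is_subgroupD(1)[OF assms(1)] assms(3) by (auto simp: stab_def)
  then show ?thesis
    using Aut_image_nbhd[OF _ assms(2)] by metis
qed

lemma compactin_local_action_iff: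
  assumes sub: "is_subgroup G (Aut V E)" and v: "v \<in> V"
    and closed: "closedin (perm_top (nbhd V E v)) (induced (stab G v) (nbhd V E v))"
  shows "compactin (perm_top (nbhd V E v)) (induced (stab G v) (nbhd V E v))
    \<longleftrightarrow> (\<forall>z\<in>nbhd V E v. finite ((\<lambda>g. g z) ` stab G v))"
  by (rule compactin_induced_iff_orbits_finite[OF subgroup_stab_bij[OF sub]
        subgroup_stab_inv[OF sub] subgroup_stab_nbhd_invariant[OF sub v] closed])

lemma compactin_stab_local_action_iff:
  assumes sub: "is_subgroup G (Aut V E)" and v: "v \<in> V"
    and closed: "closedin (perm_top (nbhd V E v)) (induced (stab G v) (nbhd V E v))"
    and u: "u \<in> nbhd V E v"
  shows "compactin (perm_top (nbhd V E v)) (stab (induced (stab G v) (nbhd V E v)) u)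
    \<longleftrightarrow> (\<forall>z\<in>nbhd V E v. finite ((\<lambda>g. g z) ` stab (stab G v) u))"
  by (rule compactin_stab_induced_iff_orbits_finite[OF subgroup_stab_bij[OF sub]
        subgroup_stab_inv[OF sub] subgroup_stab_nbhd_invariant[OF sub v] closed u])

section \<open>Leafless bipartite trees\<close>

locale leafless_bipartite_tree =
  fixes V :: "'v set" and E :: "'v \<Rightarrow> 'v \<Rightarrow> bool" and A B :: "'v set"
  assumes tree: "is_tree V E"
    and no_leaf: "\<forall>v\<in>V. \<not> (\<exists>w. nbhd V E v = {w})"
    and parts: "A \<union> B = V" "A \<inter> B = {}"
    and edge_between: "\<forall>x y. E x y \<longrightarrow> (x \<in> A \<and> y \<in> B) \<or> (x \<in> B \<and> y \<in> A)"
begin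

lemma swap_parts: "leafless_bipartite_tree V E B A"
  using tree no_leaf parts edge_between by unfold_locales blast+

lemma nbr_of_A: "x \<in> A \<Longrightarrow> E x y \<Longrightarrow> y \<in> B"
  using edge_between parts(2) by blast

lemma nbr_of_B: "x \<in> B \<Longrightarrow> E x y \<Longrightarrow> y \<in> A"
  using edge_between parts(2) by blast

lemma two_nbrs:
  assumes "v \<in> V" "u \<in> V" "u \<noteq> v"
  shows "\<exists>a b. a \<noteq> b \<and> E v a \<and> E v b"
proof -
  obtain a where a: "E v a"
    using tree_has_nbr[OF tree assms] by blast
  then have "a \<in> nbhd V E v"
    using tree_edge_in_V[OF tree a] unfolding nbhd_def by blast
  moreover have "nbhd V E v \<noteq> {a}"
    using no_leaf assms(1) by blast
  ultimately obtain b where "b \<in> nbhd V E v" "b \<noteq> a"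
    by blast
  then show ?thesis
    using a unfolding nbhd_def by blast
qed

lemma two_nbrs_of_B:
  assumes "A \<noteq> {}" "w \<in> B"
  shows "\<exists>a b. a \<noteq> b \<and> E w a \<and> E w b"
proof -
  obtain a0 where "a0 \<in> A"
    using assms(1) by blast
  then have "a0 \<in> V" "a0 \<noteq> w" "w \<in> V"
    using assms(2) parts by blast+
  then show ?thesis
    using two_nbrs by blast
qed

text \<open>Two vertices of a tree have at most one common neighbour, so in the definition below the
  value at w does not depend on the choice of g and of the two neighbours (lemma extend_eq).\<close>

definition extend :: "('v \<Rightarrow> 'v) set \<Rightarrow> ('v \<Rightarrow> 'v) \<Rightarrow> 'v \<Rightarrow> 'v" where
  "extend G f x =
     (if x \<in> A then f x
      else if x \<in> B then
        (SOME y. \<exists>g\<in>G. \<exists>a b. a \<noteq> b \<and> E x a \<and> E x b \<and> g a = f a \<and> g b = f b \<and> g x = y)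
      else x)"

lemma extend_eq:
  assumes G: "G \<subseteq> Aut V E" and approx: "finitely_approximable G A f"
    and w: "w \<in> B" and g: "g \<in> G"
    and ab: "a \<noteq> b" "E w a" "E w b" "g a = f a" "g b = f b"
  shows "g w = extend G f w"
proof -
  let ?P = "\<lambda>y. \<exists>g\<in>G. \<exists>a b. a \<noteq> b \<and> E w a \<and> E w b \<and> g a = f a \<and> g b = f b \<and> g w = y"
  have "?P (g w)"
    using g ab by blast
  then have "?P (SOME y. ?P y)"
    by (rule someI)
  moreover have "extend G f w = (SOME y. ?P y)"
    using w parts(2) unfolding extend_def by auto
  ultimately have "?P (extend G f w)"
    by simp
  then obtain g' a' b' where g': "g' \<in> G" "a' \<noteq> b'" "E w a'" "E w b'" "g' a' = f a'" "g' b' = f b'"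
    and extend_w: "g' w = extend G f w"
    by blast
  have "{a, b, a', b'} \<subseteq> A"
    using nbr_of_B[OF w] ab(2,3) g'(3,4) by blast
  then obtain h where h: "h \<in> G" "\<forall>x\<in>{a, b, a', b'}. h x = f x"
    using finitely_approximableD[OF approx] by (meson finite.emptyI finite.insertI)
  have "g w = h w"
    by (rule Aut_eq_if_eq_on_two_nbrs[OF tree _ _ ab(2,3,1)]) (use G g h ab(4,5) in auto)
  also have "\<dots> = g' w"
    by (rule Aut_eq_if_eq_on_two_nbrs[OF tree _ _ g'(3,4,2)]) (use G g' h in auto)
  finally show ?thesis
    using extend_w by simp
qed

lemma extend_determined_by_finite:
  assumes G: "G \<subseteq> Aut V E" and approx: "finitely_approximable G A f" and "A \<noteq> {}"
    and "finite F" "F \<subseteq> V"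
  shows "\<exists>F'. finite F' \<and> F' \<subseteq> A \<and> (\<forall>g\<in>G. (\<forall>x\<in>F'. g x = f x) \<longrightarrow> (\<forall>x\<in>F. g x = extend G f x))"
  using \<open>finite F\<close> \<open>F \<subseteq> V\<close>
proof (induction F)
  case empty
  show ?case
    by blast
next
  case (insert w F)
  then obtain F' where F': "finite F'" "F' \<subseteq> A"
    and agree: "\<forall>g\<in>G. (\<forall>x\<in>F'. g x = f x) \<longrightarrow> (\<forall>x\<in>F. g x = extend G f x)"
    by auto
  consider "w \<in> A" | "w \<in> B"
    using insert.prems parts(1) by blast
  then show ?case
  proof cases
    case 1
    then show ?thesis
      using F' agree by (intro exI[of _ "insert w F'"]) (auto simp: extend_def)
  next
    case 2
    obtain a b where ab: "a \<noteq> b" "E w a" "E w b"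
      using two_nbrs_of_B[OF \<open>A \<noteq> {}\<close> 2] by blast
    then have "{a, b} \<subseteq> A"
      using nbr_of_B[OF 2] by blast
    moreover have "g w = extend G f w" if "g \<in> G" "\<forall>x\<in>F' \<union> {a, b}. g x = f x" for g
      using extend_eq[OF G approx 2 that(1) ab] that(2) by simp
    ultimately show ?thesis
      using F' agree by (intro exI[of _ "F' \<union> {a, b}"]) auto
  qed
qed

lemma finitely_approximable_extend:
  assumes "G \<subseteq> Aut V E" "finitely_approximable G A f" "A \<noteq> {}"
  shows "finitely_approximable G V (extend G f)"
  unfolding finitely_approximable_def
proof (intro allI impI, elim conjE)
  fix F
  assume F: "finite F" "F \<subseteq> V"
  obtain F' where F': "finite F'" "F' \<subseteq> A"
    and agree: "\<forall>g\<in>G. (\<forall>x\<in>F'. g x = f x) \<longrightarrow> (\<forall>x\<in>F. g x = extend G f x)"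
    using extend_determined_by_finite[OF assms F] by blast
  obtain g where "g \<in> G" "\<forall>x\<in>F'. g x = f x"
    using finitely_approximableD[OF assms(2) F'] by blast
  then show "\<exists>g\<in>G. \<forall>x\<in>F. g x = extend G f x"
    using agree by blast
qed

lemma extend_onto_B:
  assumes G: "G \<subseteq> Aut V E" and approx: "finitely_approximable G A f"
    and f: "f \<in> Sym A" and "A \<noteq> {}" and y: "y \<in> B"
  shows "y \<in> extend G f ` V"
proof -
  obtain c d where cd: "c \<noteq> d" "E y c" "E y d"
    using two_nbrs_of_B[OF \<open>A \<noteq> {}\<close> y] by blast
  then have "c \<in> f ` A" "d \<in> f ` A"
    using nbr_of_B[OF y] permutes_image[of f A] f unfolding Sym_iff_permutes by auto
  then obtain a b where ab: "a \<in> A" "b \<in> A" "f a = c" "f b = d"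
    by (metis imageE)
  then obtain g where g: "g \<in> G" "g a = c" "g b = d"
    using finitely_approximableD[OF approx, of "{a, b}"] by auto
  have perm: "g permutes V"
    using G g(1) by (blast intro: Aut_permutes)
  define x where "x = inv g y"
  have x: "x \<in> V" "g x = y"
    unfolding x_def using perm y parts(1)
    by (auto simp: permutes_inv permutes_in_image permutes_inverses)
  have "a \<in> V" "b \<in> V"
    using ab parts(1) by blast+
  then have "E x a" "E x b"
    using Aut_edge_iff[of g V E x] G g x cd by auto
  moreover have "a \<noteq> b"
    using ab cd by blast
  moreover have "x \<in> B"
    using nbr_of_A[OF \<open>a \<in> A\<close> tree_edge_sym[OF tree \<open>E x a\<close>]] .
  ultimately have "g x = extend G f x"
    using extend_eq[OF G approx _ g(1)] ab g by simp
  then show ?thesis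
    using x by (metis imageI)
qed

lemma extend_onto:
  assumes G: "G \<subseteq> Aut V E" and approx: "finitely_approximable G A f"
    and f: "f \<in> Sym A" and "A \<noteq> {}"
  shows "V \<subseteq> extend G f ` V"
proof
  fix y
  assume "y \<in> V"
  then consider "y \<in> A" | "y \<in> B"
    using parts(1) by blast
  then show "y \<in> extend G f ` V"
  proof cases
    case 1
    then obtain x where "x \<in> A" "y = f x"
      using permutes_image[of f A] f unfolding Sym_iff_permutes by (metis imageE)
    moreover have "x \<in> V" "extend G f x = f x"
      using \<open>x \<in> A\<close> parts(1) by (auto simp: extend_def)
    ultimately show ?thesis
      by (metis image_eqI)
  next
    case 2
    then show ?thesis
      using extend_onto_B[OF assms] by blast
  qed
qed

lemma extend_in_Aut:
  assumes G: "G \<subseteq> Aut V E" and approx: "finitely_approximable G A f"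
    and f: "f \<in> Sym A" and "A \<noteq> {}"
  shows "extend G f \<in> Aut V E"
proof (rule Aut_if_finitely_approximable)
  show "extend G f x = x" if "x \<notin> V" for x
    using that parts(1) by (auto simp: extend_def)
  show "V \<subseteq> extend G f ` V"
    using assms by (rule extend_onto)
  show "finitely_approximable (Aut V E) V (extend G f)"
    using finitely_approximable_extend[OF G approx \<open>A \<noteq> {}\<close>] G
    by (rule finitely_approximable_mono)
qed

lemma restr_extend: "f \<in> Sym A \<Longrightarrow> restr A (extend G f) = f"
  unfolding restr_def extend_def Sym_iff_permutes by (auto simp: permutes_not_in)

lemma closedin_induced:
  assumes closed: "closedin (subtopology (perm_top V) (Aut V E)) G"
    and invariant: "\<forall>g\<in>G. g ` A = A"
  shows "closedin (perm_top A) (induced G A)"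
proof -
  have G: "G \<subseteq> Aut V E"
    using closed by (rule closedin_Aut_subset)
  have "restr A g \<in> Sym A" if "g \<in> G" for g
    using that G invariant by (blast intro: restr_Sym permutes_bij[OF Aut_permutes])
  then have "induced G A \<subseteq> Sym A"
    unfolding induced_def by blast
  moreover have "f \<in> induced G A"
    if f: "f \<in> Sym A" and "finitely_approximable (induced G A) A f" for f
  proof -
    have approx: "finitely_approximable G A f"
      using that(2) by (simp add: finitely_approximable_induced_iff)
    show ?thesis
    proof (cases "A = {}")
      case True
      then obtain g where "g \<in> G"
        using finitely_approximableD[OF approx, of "{}"] by auto
      moreover have "restr A g = f"
        using f True unfolding restr_def Sym_def by auto
      ultimately show ?thesis
        unfolding induced_def by blast
    next
      case False
      then have "extend G f \<in> G"
        using closedin_Aut_mem[OF closed] extend_in_Aut finitely_approximable_extend G approx f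
        by blast
      then show ?thesis
        using restr_extend[OF f] unfolding induced_def by (metis image_eqI)
    qed
  qed
  ultimately show ?thesis
    unfolding closedin_perm_top by blast
qed

lemma finite_next_vertex_orbit:
  assumes local_A: "\<And>v u z. v \<in> A \<Longrightarrow> u \<in> nbhd V E v \<Longrightarrow> z \<in> nbhd V E v
        \<Longrightarrow> finite ((\<lambda>g. g z) ` stab (stab G v) u)"
    and local_B: "\<And>w z. w \<in> B \<Longrightarrow> z \<in> nbhd V E w \<Longrightarrow> finite ((\<lambda>g. g z) ` stab G w)"
    and x: "x \<in> B" and walk: "walk_in V E (xs @ [z])" "xs \<noteq> []" "hd xs = x"
  shows "finite ((\<lambda>h. h z) ` {h \<in> stab G x. \<forall>a\<in>set xs. h a = a})"
proof -
  have walk_xs: "walk_in V E xs" and "E (last xs) z"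
    using walk_snocD[OF walk(1,2)] by auto
  moreover have "z \<in> V"
    using walk(1) by (simp add: walk_in_def)
  ultimately have z: "z \<in> nbhd V E (last xs)"
    by (simp add: nbhd_def)
  have last_in: "last xs \<in> set xs"
    using walk(2) by simp
  show ?thesis
  proof (cases "last xs \<in> B")
    case True
    have "(\<lambda>h. h z) ` {h \<in> stab G x. \<forall>a\<in>set xs. h a = a} \<subseteq> (\<lambda>g. g z) ` stab G (last xs)"
      using last_in by (auto simp: stab_def)
    then show ?thesis
      using local_B[OF True z] by (rule finite_subset)
  next
    case False
    then have "last xs \<in> A"
      using walk_xs parts(1) last_in unfolding walk_in_def by blast
    moreover obtain ys l where xs: "xs = ys @ [l]"
      using walk(2) by (metis rev_exhaust)
    moreover have "ys \<noteq> []"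
      using xs walk(3) x False by auto
    ultimately have p: "last ys \<in> nbhd V E (last xs)" "last ys \<in> set xs"
      using walk_snocD[of V E ys l] walk_xs tree_edge_sym[OF tree] tree_edge_in_V[OF tree]
      by (auto simp: nbhd_def)
    have "(\<lambda>h. h z) ` {h \<in> stab G x. \<forall>a\<in>set xs. h a = a}
        \<subseteq> (\<lambda>g. g z) ` stab (stab G (last xs)) (last ys)"
      using last_in p(2) by (auto simp: stab_def)
    then show ?thesis
      using local_A[OF \<open>last xs \<in> A\<close> p(1) z] by (rule finite_subset)
  qed
qed

lemma finite_walk_orbit:
  assumes sub: "is_subgroup G (Aut V E)"
    and local_A: "\<And>v u z. v \<in> A \<Longrightarrow> u \<in> nbhd V E v \<Longrightarrow> z \<in> nbhd V E v
        \<Longrightarrow> finite ((\<lambda>g. g z) ` stab (stab G v) u)"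
    and local_B: "\<And>w z. w \<in> B \<Longrightarrow> z \<in> nbhd V E w \<Longrightarrow> finite ((\<lambda>g. g z) ` stab G w)"
    and x: "x \<in> B"
  shows "walk_in V E xs \<Longrightarrow> hd xs = x \<Longrightarrow> finite ((\<lambda>g. map g xs) ` stab G x)"
proof (induction xs rule: rev_induct)
  case Nil
  then show ?case
    by (simp add: walk_in_def)
next
  case (snoc z xs)
  show ?case
  proof (cases "xs = []")
    case True
    then have "(\<lambda>g. map g (xs @ [z])) ` stab G x \<subseteq> {[x]}"
      using snoc.prems(2) by (auto simp: stab_def)
    then show ?thesis
      by (rule finite_subset) simp
  next
    case False
    then have "finite ((\<lambda>g. map g xs) ` stab G x)"
      using snoc.IH walk_snocD(1)[OF snoc.prems(1)] snoc.prems(2) by simp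
    moreover have "finite ((\<lambda>h. h z) ` {h \<in> stab G x. \<forall>a\<in>set xs. h a = a})"
      using finite_next_vertex_orbit[OF local_A local_B x snoc.prems(1) False] snoc.prems(2) False
      by simp
    ultimately show ?thesis
      by (intro finite_orbit_snoc subgroup_stab_bij[OF sub] subgroup_stab_inv_comp[OF sub])
  qed
qed

lemma finite_stab_stab_orbit_if_global:
  assumes global: "\<forall>x\<in>B. \<forall>y\<in>B. finite ((\<lambda>g. g y) ` stab G x)"
    and v: "v \<in> A" and "u \<in> nbhd V E v" "z \<in> nbhd V E v"
  shows "finite ((\<lambda>g. g z) ` stab (stab G v) u)"
proof -
  have "u \<in> B" "z \<in> B"
    using assms(3,4) nbr_of_A[OF v] by (auto simp: nbhd_def)
  then have "finite ((\<lambda>g. g z) ` stab G u)"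
    using global by blast
  moreover have "(\<lambda>g. g z) ` stab (stab G v) u \<subseteq> (\<lambda>g. g z) ` stab G u"
    by (auto simp: stab_def)
  ultimately show ?thesis
    by (rule finite_subset[rotated])
qed

lemma finite_local_orbit_if_global:
  assumes sub: "is_subgroup G (Aut V E)"
    and global: "\<forall>x\<in>B. \<forall>y\<in>B. finite ((\<lambda>g. g y) ` stab G x)"
    and w: "w \<in> B" and y: "y \<in> nbhd V E w"
  shows "finite ((\<lambda>g. g y) ` stab G w)"
proof -
  have wy: "E w y" "y \<in> V" "w \<in> V"
    using y w parts(1) by (auto simp: nbhd_def)
  then have "w \<in> nbhd V E y"
    using tree_edge_sym[OF tree] by (simp add: nbhd_def)
  moreover have "nbhd V E y \<noteq> {w}"
    using no_leaf wy(2) by blast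
  ultimately obtain w' where w': "w' \<in> nbhd V E y" "w' \<noteq> w"
    by blast
  then have yw': "E y w'" "w' \<in> V"
    by (auto simp: nbhd_def)
  have "w' \<in> B"
    using nbr_of_A[OF nbr_of_B[OF w wy(1)] yw'(1)] .
  define Orb where "Orb = (\<lambda>g. g w') ` stab G w"
  have "finite Orb"
    unfolding Orb_def using global[rule_format, OF w \<open>w' \<in> B\<close>] .
  have "(\<lambda>g. g y) ` stab G w \<subseteq> (\<Union>z\<in>Orb - {w}. {c. E w c \<and> E z c})"
  proof
    fix c
    assume "c \<in> (\<lambda>g. g y) ` stab G w"
    then obtain g where g: "g \<in> G" "g w = w" "c = g y"
      unfolding stab_def by blast
    have Aut: "g \<in> Aut V E"
      using is_subgroupD(1)[OF sub] g(1) by blast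
    have "E w c"
      using Aut_edge_iff[OF Aut wy(3,2)] wy(1) g by simp
    moreover have "E (g w') c"
      using Aut_edge_iff[OF Aut yw'(2) wy(2)] tree_edge_sym[OF tree yw'(1)] g(3) by simp
    moreover have "g w' \<noteq> g w"
      using w'(2) bij_is_inj[OF subgroup_Aut_bij[OF sub g(1)]] by (simp add: inj_eq)
    then have "g w' \<noteq> w"
      using g(2) by simp
    moreover have "g w' \<in> Orb"
      unfolding Orb_def stab_def using g(1,2) by blast
    ultimately show "c \<in> (\<Union>z\<in>Orb - {w}. {c. E w c \<and> E z c})"
      by blast
  qed
  moreover have "finite (\<Union>z\<in>Orb - {w}. {c. E w c \<and> E z c})"
    using \<open>finite Orb\<close> by (intro finite_UN_I) (auto intro: finite_common_nbrs[OF tree])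
  ultimately show ?thesis
    by (rule finite_subset)
qed

lemma local_orbits_finite_iff:
  assumes sub: "is_subgroup G (Aut V E)"
  shows "(\<forall>v\<in>A. \<forall>w\<in>B.
            (\<forall>u\<in>nbhd V E v. \<forall>z\<in>nbhd V E v. finite ((\<lambda>g. g z) ` stab (stab G v) u))
          \<and> (\<forall>z\<in>nbhd V E w. finite ((\<lambda>g. g z) ` stab G w)))
    \<longleftrightarrow> (\<forall>x\<in>B. \<forall>y\<in>B. finite ((\<lambda>g. g y) ` stab G x))"
proof
  assume local_finite: "\<forall>v\<in>A. \<forall>w\<in>B.
      (\<forall>u\<in>nbhd V E v. \<forall>z\<in>nbhd V E v. finite ((\<lambda>g. g z) ` stab (stab G v) u))
    \<and> (\<forall>z\<in>nbhd V E w. finite ((\<lambda>g. g z) ` stab G w))"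
  show "\<forall>x\<in>B. \<forall>y\<in>B. finite ((\<lambda>g. g y) ` stab G x)"
  proof (intro ballI)
    fix x y
    assume x: "x \<in> B" and y: "y \<in> B"
    have local_A: "finite ((\<lambda>g. g z) ` stab (stab G v) u)"
      if "v \<in> A" "u \<in> nbhd V E v" "z \<in> nbhd V E v" for v u z
      using local_finite that x by blast
    have local_B: "finite ((\<lambda>g. g z) ` stab G w)" if "w \<in> B" "z \<in> nbhd V E w" for w z
    proof -
      have "z \<in> A"
        using that nbr_of_B by (auto simp: nbhd_def)
      then show ?thesis
        using local_finite that by blast
    qed
    obtain xs where xs: "walk_in V E xs" "hd xs = x" "last xs = y"
      using tree x y parts(1) unfolding is_tree_def by blast
    then have "(\<lambda>g. g y) ` stab G x \<subseteq> last ` (\<lambda>g. map g xs) ` stab G x"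
      by (auto simp: walk_in_def last_map image_image)
    moreover have "finite ((\<lambda>g. map g xs) ` stab G x)"
      using finite_walk_orbit[OF sub local_A local_B x xs(1,2)] .
    ultimately show "finite ((\<lambda>g. g y) ` stab G x)"
      by (auto elim: finite_subset)
  qed
next
  assume "\<forall>x\<in>B. \<forall>y\<in>B. finite ((\<lambda>g. g y) ` stab G x)"
  then show "\<forall>v\<in>A. \<forall>w\<in>B.
      (\<forall>u\<in>nbhd V E v. \<forall>z\<in>nbhd V E v. finite ((\<lambda>g. g z) ` stab (stab G v) u))
    \<and> (\<forall>z\<in>nbhd V E w. finite ((\<lambda>g. g z) ` stab G w))"
    using finite_stab_stab_orbit_if_global finite_local_orbit_if_global[OF sub] by blast
qed

lemma local_compactness_iff_global:
  assumes sub: "is_subgroup G (Aut V E)" and invariant: "\<forall>g\<in>G. g ` B = B"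
    and closed: "closedin (perm_top B) (induced G B)"
    and local_closed: "\<forall>v\<in>V. closedin (perm_top (nbhd V E v)) (induced (stab G v) (nbhd V E v))"
  shows "(\<forall>v\<in>A. \<forall>w\<in>B.
            (\<forall>u\<in>nbhd V E v. compactin (perm_top (nbhd V E v))
                 (stab (induced (stab G v) (nbhd V E v)) u))
          \<and> compactin (perm_top (nbhd V E w)) (induced (stab G w) (nbhd V E w)))
    \<longleftrightarrow> (\<forall>x\<in>B. compactin (perm_top B) (stab (induced G B) x))"
proof -
  have global_iff: "compactin (perm_top B) (stab (induced G B) x)
      \<longleftrightarrow> (\<forall>y\<in>B. finite ((\<lambda>g. g y) ` stab G x))" if "x \<in> B" for x
    using compactin_stab_induced_iff_orbits_finite[OF _ _ _ closed that]
      subgroup_Aut_bij[OF sub] is_subgroupD(2)[OF sub] invariant by blast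
  have "v \<in> V" if "v \<in> A \<or> v \<in> B" for v
    using that parts(1) by blast
  then show ?thesis
    using local_orbits_finite_iff[OF sub] global_iff local_closed
      compactin_local_action_iff[OF sub] compactin_stab_local_action_iff[OF sub]
    by (simp cong: ball_cong)
qed

end

theorem lemma6p2:
  fixes V :: "'v set" and E :: "'v \<Rightarrow> 'v \<Rightarrow> bool"
    and V1 V2 :: "'v set" and G :: "('v \<Rightarrow> 'v) set"
  assumes tree: "is_tree V E"
    and no_leaf: "\<forall>v\<in>V. \<not> (\<exists>w. nbhd V E v = {w})"
    and bip: "V1 \<union> V2 = V" "V1 \<inter> V2 = {}"
      "\<forall>x y. E x y \<longrightarrow> (x \<in> V1 \<and> y \<in> V2) \<or> (x \<in> V2 \<and> y \<in> V1)"
    and sub: "is_subgroup G (Aut V E)"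
    and closed: "closedin (subtopology (perm_top V) (Aut V E)) G"
    and fix12: "\<forall>g\<in>G. g ` V1 = V1 \<and> g ` V2 = V2"
  shows "closedin (perm_top V1) (induced G V1) \<and> closedin (perm_top V2) (induced G V2)
    \<and> ((\<forall>v\<in>V. closedin (perm_top (nbhd V E v)) (induced (stab G v) (nbhd V E v))) \<longrightarrow>
        ((\<forall>v\<in>V1. \<forall>w\<in>V2.
            (\<forall>u\<in>nbhd V E v. compactin (perm_top (nbhd V E v))
                 (stab (induced (stab G v) (nbhd V E v)) u))
          \<and> compactin (perm_top (nbhd V E w)) (induced (stab G w) (nbhd V E w)))
        \<longleftrightarrow>
         (\<forall>x\<in>V2. compactin (perm_top V2) (stab (induced G V2) x))))"
proof -
  interpret leafless_bipartite_tree V E V1 V2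
    using tree no_leaf bip by unfold_locales
  have closed1: "closedin (perm_top V1) (induced G V1)"
    using closedin_induced[OF closed] fix12 by blast
  have closed2: "closedin (perm_top V2) (induced G V2)"
    using leafless_bipartite_tree.closedin_induced[OF swap_parts closed] fix12 by blast
  show ?thesis
    using closed1 closed2 local_compactness_iff_global[OF sub _ closed2] fix12 by blast
qed

end
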